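(* If $f:\mathbb{R}\to\mathbb{R}_{>0}$ is very rapidly decreasing and $g:\mathbb{R}\to\mathbb{R}_{>0}$ is a positive, bounded, continuous function, then $fg$ is very rapidly decreasing.
   Context: A positive function $f:\mathbb{R}\to\mathbb{R}_{>0}$ is called very rapidly decreasing (VRD) if every smooth compactly supported function $h:\mathbb{R}\to\mathbb{R}$ is a uniform limit on $\mathbb{R}$ of functions of the form $f(x)P(x)$ with $P$ a real polynomial. *)

theory Defs
  imports "HOL-Analysis.Analysis" "HOL-Computational_Algebra.Polynomial"
begin

definition smooth_real :: "(real \<Rightarrow> real) \<Rightarrow> bool" where
  "smooth_real h \<longleftrightarrow> (\<forall>n x. ((deriv ^^ n) h) differentiable (at x))"

definition compact_support :: "(real \<Rightarrow> real) \<Rightarrow> bool" where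
  "compact_support h \<longleftrightarrow> compact (closure {x. h x \<noteq> 0})"

definition VRD :: "(real \<Rightarrow> real) \<Rightarrow> bool" where
  "VRD f \<longleftrightarrow> (\<forall>x. f x > 0) \<and>
     (\<forall>h. smooth_real h \<and> compact_support h \<longrightarrow>
        (\<forall>e>0. \<exists>P :: real poly. \<forall>x. \<bar>h x - f x * poly P x\<bar> < e))"

end

theory Submission
  imports Defs
begin

(* Let M > 0 bound g.  Given a smooth compactly supported h and e > 0 it
   suffices to approximate h / g uniformly within e / M by f * P, since then
   |h - f g P| = g |h / g - f P| < e.  To do so, approximate 1 / g on the (compact)
   support K of h by a polynomial Q (Stone-Weierstrass); then h * Q approximates h / g
   uniformly on all of R, because h vanishes off K.  The function h * Q is again smooth
   with compact support, so the VRD property of f approximates it by some f * P. *)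

definition differentiable_upto :: "nat \<Rightarrow> (real \<Rightarrow> real) \<Rightarrow> bool" where
  "differentiable_upto n F \<longleftrightarrow> (\<forall>m\<le>n. \<forall>x. (deriv ^^ m) F differentiable (at x))"

lemma smooth_real_iff_differentiable_upto:
  "smooth_real F \<longleftrightarrow> (\<forall>n. differentiable_upto n F)"
  unfolding smooth_real_def differentiable_upto_def by blast

lemma differentiable_upto_mono:
  "differentiable_upto (Suc n) F \<Longrightarrow> differentiable_upto n F"
  unfolding differentiable_upto_def by simp

lemma differentiable_upto_Suc:
  "differentiable_upto (Suc n) F \<longleftrightarrow>
     (\<forall>x. F differentiable (at x)) \<and> differentiable_upto n (deriv F)"
proof -
  have "(\<forall>m\<le>Suc n. P m) \<longleftrightarrow> P 0 \<and> (\<forall>m\<le>n. P (Suc m))" for P :: "nat \<Rightarrow> bool"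
    by (metis Suc_le_mono le0 not0_implies_Suc)
  then show ?thesis
    unfolding differentiable_upto_def by (simp only: funpow_Suc_right comp_def funpow_0)
qed

lemma differentiable_upto_0: "differentiable_upto 0 F \<longleftrightarrow> (\<forall>x. F differentiable (at x))"
  unfolding differentiable_upto_def by simp

lemma deriv_add_everywhere:
  fixes A B :: "real \<Rightarrow> real"
  assumes "\<forall>x. A differentiable (at x)" "\<forall>x. B differentiable (at x)"
  shows "deriv (\<lambda>x. A x + B x) = (\<lambda>x. deriv A x + deriv B x)"
proof
  fix x
  have "(A has_real_derivative deriv A x) (at x)" "(B has_real_derivative deriv B x) (at x)"
    using assms DERIV_deriv_iff_real_differentiable by blast+
  from DERIV_add[OF this] show "deriv (\<lambda>x. A x + B x) x = deriv A x + deriv B x"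
    by (rule DERIV_imp_deriv)
qed

lemma deriv_mult_everywhere:
  fixes A B :: "real \<Rightarrow> real"
  assumes "\<forall>x. A differentiable (at x)" "\<forall>x. B differentiable (at x)"
  shows "deriv (\<lambda>x. A x * B x) = (\<lambda>x. deriv A x * B x + A x * deriv B x)"
proof
  fix x
  have "(A has_real_derivative deriv A x) (at x)" "(B has_real_derivative deriv B x) (at x)"
    using assms DERIV_deriv_iff_real_differentiable by blast+
  from DERIV_mult[OF this] show "deriv (\<lambda>x. A x * B x) x = deriv A x * B x + A x * deriv B x"
    by (intro DERIV_imp_deriv) (simp add: algebra_simps)
qed

lemma differentiable_upto_add:
  "differentiable_upto n A \<Longrightarrow> differentiable_upto n B \<Longrightarrow>
     differentiable_upto n (\<lambda>x. A x + B x)"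
proof (induction n arbitrary: A B)
  case 0
  then show ?case by (simp add: differentiable_upto_0 differentiable_add)
next
  case (Suc n)
  then show ?case
    by (simp add: differentiable_upto_Suc differentiable_add deriv_add_everywhere)
qed

lemma differentiable_upto_mult:
  "differentiable_upto n A \<Longrightarrow> differentiable_upto n B \<Longrightarrow>
     differentiable_upto n (\<lambda>x. A x * B x)"
proof (induction n arbitrary: A B)
  case 0
  then show ?case by (simp add: differentiable_upto_0 differentiable_mult)
next
  case (Suc n)
  have A: "\<forall>x. A differentiable (at x)" "differentiable_upto n (deriv A)"
    and B: "\<forall>x. B differentiable (at x)" "differentiable_upto n (deriv B)"
    using Suc.prems by (simp_all add: differentiable_upto_Suc)
  have "differentiable_upto n A" "differentiable_upto n B"
    using Suc.prems by (simp_all only: differentiable_upto_mono)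
  then have "differentiable_upto n (\<lambda>x. deriv A x * B x + A x * deriv B x)"
    using A(2) B(2) by (intro differentiable_upto_add Suc.IH)
  then show ?case
    using A(1) B(1) by (simp add: differentiable_upto_Suc differentiable_mult
        deriv_mult_everywhere)
qed

lemma poly_differentiable: "poly Q differentiable (at (x :: real))"
  using poly_DERIV real_differentiable_def by blast

text \<open>Polynomials are smooth, since their derivatives are again polynomials.\<close>
lemma differentiable_upto_poly: "differentiable_upto n (poly Q)"
proof (induction n arbitrary: Q)
  case 0
  show ?case
    unfolding differentiable_upto_0 using poly_differentiable by blast
next
  case (Suc n)
  have "deriv (poly Q) = poly (pderiv Q)"
    using poly_DERIV DERIV_imp_deriv by blast
  then show ?case
    using Suc.IH poly_differentiable by (simp add: differentiable_upto_Suc)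
qed

lemma smooth_real_mult_poly: "smooth_real h \<Longrightarrow> smooth_real (\<lambda>x. h x * poly Q x)"
  by (simp add: smooth_real_iff_differentiable_upto differentiable_upto_mult
      differentiable_upto_poly)

lemma smooth_real_continuous: "smooth_real h \<Longrightarrow> continuous_on UNIV h"
  using differentiable_upto_0[of h]
  by (meson smooth_real_iff_differentiable_upto continuous_at_imp_continuous_on
      differentiable_imp_continuous_within)

lemma compact_support_mult:
  assumes "compact_support h"
  shows "compact_support (\<lambda>x. h x * k x)"
proof -
  have "closure {x. h x * k x \<noteq> 0} \<subseteq> closure {x. h x \<noteq> 0}"
    by (intro closure_mono) auto
  then show ?thesis
    using assms unfolding compact_support_def
    by (meson bounded_subset closed_closure compact_eq_bounded_closed compact_imp_bounded)
qed

lemma real_polynomial_function_poly: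
  "real_polynomial_function (p :: real \<Rightarrow> real) \<Longrightarrow> \<exists>Q. p = poly Q"
proof (induction p rule: real_polynomial_function.induct)
  case (linear f)
  then obtain c where "f = (\<lambda>x. x * c)" using real_bounded_linear by blast
  then show ?case by (intro exI[of _ "[:0, c:]"]) auto
next
  case (const c)
  then show ?case by (intro exI[of _ "[:c:]"]) auto
next
  case (add f g)
  then obtain A B where "f = poly A" "g = poly B" by blast
  then show ?case by (intro exI[of _ "A + B"]) auto
next
  case (mult f g)
  then obtain A B where "f = poly A" "g = poly B" by blast
  then show ?case by (intro exI[of _ "A * B"]) auto
qed

text \<open>If h is continuous with compact support and g is continuous and nowhere zero, then
  h / g is a uniform limit of h * Q with Q a polynomial: approximate 1 / g on the
  support of h by Stone-Weierstrass.\<close>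
lemma quotient_approx_by_poly_multiple:
  fixes h g :: "real \<Rightarrow> real"
  assumes h: "continuous_on UNIV h" "compact_support h"
    and g: "continuous_on UNIV g" "\<forall>x. g x \<noteq> 0"
    and e: "e > 0"
  obtains Q where "\<forall>x. \<bar>h x / g x - h x * poly Q x\<bar> < e"
proof -
  define K where "K = closure {x. h x \<noteq> 0}"
  have K: "compact K" using h(2) unfolding K_def compact_support_def .
  obtain B where B: "B > 0" "\<forall>x\<in>K. \<bar>h x\<bar> \<le> B"
    using compact_imp_bounded[OF compact_continuous_image[OF continuous_on_subset[OF h(1)] K]]
    by (auto simp: bounded_pos)
  have "continuous_on K g"
    using g(1) by (rule continuous_on_subset) simp
  then have inv_g: "continuous_on K (\<lambda>x. 1 / g x)"
    using g(2) by (intro continuous_on_divide continuous_on_const) auto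
  have "e / B > 0" using e B(1) by simp
  from Stone_Weierstrass_real_polynomial_function[OF K inv_g this]
  obtain p
    where p: "real_polynomial_function p" "\<And>x. x \<in> K \<Longrightarrow> \<bar>1 / g x - p x\<bar> < e / B" by blast
  obtain Q where Q: "p = poly Q" using real_polynomial_function_poly[OF p(1)] by blast
  have "\<bar>h x / g x - h x * poly Q x\<bar> < e" for x
  proof (cases "h x = 0")
    case False
    have x: "x \<in> K"
      unfolding K_def by (rule closure_subset[THEN subsetD]) (simp add: False)
    have "h x / g x - h x * poly Q x = h x * (1 / g x - p x)"
      by (simp add: Q right_diff_distrib)
    then have "\<bar>h x / g x - h x * poly Q x\<bar> = \<bar>h x\<bar> * \<bar>1 / g x - p x\<bar>"
      by (simp add: abs_mult)
    also have "\<dots> < B * (e / B)"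
      using B(2) p(2)[OF x] x False by (intro mult_le_less_imp_less) simp_all
    finally show ?thesis using B(1) by simp
  qed (use e in simp)
  then show ?thesis using that by blast
qed

lemma VRD_approx_quotient:
  fixes f g h :: "real \<Rightarrow> real"
  assumes f: "VRD f"
    and g: "continuous_on UNIV g" "\<forall>x. g x \<noteq> 0"
    and h: "smooth_real h" "compact_support h"
    and e: "e > 0"
  obtains P :: "real poly" where "\<forall>x. \<bar>h x / g x - f x * poly P x\<bar> < e"
proof -
  have e2: "e / 2 > 0" using e by simp
  obtain Q where Q: "\<forall>x. \<bar>h x / g x - h x * poly Q x\<bar> < e / 2"
    using quotient_approx_by_poly_multiple[OF smooth_real_continuous[OF h(1)] h(2) g e2] .
  have "smooth_real (\<lambda>x. h x * poly Q x)" "compact_support (\<lambda>x. h x * poly Q x)"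
    using h by (simp_all add: smooth_real_mult_poly compact_support_mult)
  then obtain P :: "real poly" where P: "\<forall>x. \<bar>h x * poly Q x - f x * poly P x\<bar> < e / 2"
    using f e2 unfolding VRD_def by blast
  have "\<bar>h x / g x - f x * poly P x\<bar> < e" for x
    using Q[rule_format, of x] P[rule_format, of x] by linarith
  then show ?thesis using that by blast
qed

theorem mainTheorem7:
  fixes f g :: "real \<Rightarrow> real"
  assumes "VRD f"
    and "\<forall>x. g x > 0"
    and "bounded (range g)"
    and "continuous_on UNIV g"
  shows "VRD (\<lambda>x. f x * g x)"
  unfolding VRD_def
proof (intro conjI allI impI)
  show "f x * g x > 0" for x
    using assms(1,2) unfolding VRD_def by simp
  obtain M where M: "M > 0" "\<forall>x. g x \<le> M"
    using assms(3) unfolding bounded_pos by (auto dest: abs_le_D1)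
  fix h :: "real \<Rightarrow> real" and e :: real
  assume h: "smooth_real h \<and> compact_support h" and e: "e > 0"
  have "continuous_on UNIV g" "\<forall>x. g x \<noteq> 0" "e / M > 0"
    using assms(2,4) e M(1) by (auto simp: less_imp_neq[symmetric])
  then obtain P :: "real poly" where P: "\<forall>x. \<bar>h x / g x - f x * poly P x\<bar> < e / M"
    using VRD_approx_quotient[OF assms(1)] h by blast
  have "\<bar>h x - f x * g x * poly P x\<bar> < e" for x
  proof -
    have gx: "g x > 0" using assms(2) by blast
    then have "h x - f x * g x * poly P x = g x * (h x / g x - f x * poly P x)"
      by (simp add: field_simps)
    then have "\<bar>h x - f x * g x * poly P x\<bar> = g x * \<bar>h x / g x - f x * poly P x\<bar>"
      using gx by (simp add: abs_mult)
    also have "\<dots> < M * (e / M)"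
      using gx M P by (intro mult_le_less_imp_less) auto
    finally show ?thesis using M(1) by simp
  qed
  then show "\<exists>P :: real poly. \<forall>x. \<bar>h x - f x * g x * poly P x\<bar> < e" by blast
qed

end
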